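(* Consider a controlled Markov chain with finite state space $X$, finite action set $U$, unknown transition probabilities $p$ and rewards $r(x,u)\in(0,1]$, controlled by the RBMLE algorithm described in the context. For an episode $k$ and $\pi\in\Pi_{sd}$, let \[ \theta_{k,\pi}\in\arg\max_{\theta\in\Theta}\Big\{\alpha(\tau_k)J(\theta,\pi)-\sum_{(x,u)}n_k(x,u)KL(\hat p_k(x,u),\theta(x,u))\Big\}. \] Then \[ |\theta_{k,\pi}(x,y,u)-\hat p_k(x,y,u)|\le d_2(x,u;\tau_k)\quad\forall (x,y,u)\in X\times X\times U, \] where $d_2(x,u;t):=\sqrt{\frac{\alpha(t)}{2n(x,u;t)}}$.
   Context: $\Pi_{sd}$ denotes the stationary deterministic policies $X\to U$. For a transition kernel $\theta$ and policy $\pi$, $J(\theta,\pi)$ is the long-term average reward $\liminf_T\frac1T\mathbb{E}\sum_{t=1}^Tr(x(t),u(t))$ under $\theta$ and $\pi$. $\Theta$ is the set of $\theta\in[0,1]^{|X|\times|X|\times|U|}$ with $\theta(x,y,u)=0$ whenever $p(x,y,u)=0$ (known zero pattern) and $\sum_y\theta(x,y,u)=1$; $\theta(x,u)=\{\theta(x,y,u)\}_{y}$. $KL(p_1,p_2)=\sum_xp_1(x)\log\frac{p_1(x)}{p_2(x)}$. $n(x,u;t)$ is the number of times action $u$ was applied in state $x$ up to time $t$, $n(x,y,u;t)$ the number of those followed by a move to $y$, $\hat p(x,y,u;t)=\frac{n(x,y,u;t)}{n(x,u;t)\vee1}$. Episodes $\mathcal{E}_k=[\tau_k,\tau_{k+1}-1]$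 with $|\mathcal{E}_k|=2^k$; $n_k=n(\cdot;\tau_k)$, $\hat p_k=\hat p(\tau_k)$; $\alpha(t)=a\log(t^b|X|^2|U|)$ with constants $a>0$, $b>2$. RBMLE: index $I_k(\pi)=\max_{\theta\in\Theta}\{\alpha(\tau_k)J(\theta,\pi)-\sum_{(x,u)}n_k(x,u)KL(\hat p_k(x,u),\theta(x,u))\}$, and during episode $k$ the policy $\pi_k\in\arg\max_{\pi\in\Pi_{sd}}I_k(\pi)$ is applied. *)

theory Defs
  imports Complex_Main "HOL-Library.Extended_Real" "HOL-Library.Liminf_Limsup"
begin

text \<open>Transition kernels: th x y u = probability of moving from x to y under action u.\<close>

definition Theta :: "('x::finite \<Rightarrow> 'x \<Rightarrow> 'u::finite \<Rightarrow> real) \<Rightarrow> ('x \<Rightarrow> 'x \<Rightarrow> 'u \<Rightarrow> real) set" where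
  "Theta p = {th. (\<forall>x y u. 0 \<le> th x y u \<and> th x y u \<le> 1)
                 \<and> (\<forall>x y u. p x y u = 0 \<longrightarrow> th x y u = 0)
                 \<and> (\<forall>x u. (\<Sum>y\<in>UNIV. th x y u) = 1)}"

text \<open>Distribution of the state at time t+1 under kernel th and stationary
  deterministic policy pl, started from state x0 at time 1.\<close>

fun state_dist :: "('x::finite \<Rightarrow> 'x \<Rightarrow> 'u \<Rightarrow> real) \<Rightarrow> ('x \<Rightarrow> 'u) \<Rightarrow> 'x \<Rightarrow> nat \<Rightarrow> 'x \<Rightarrow> real" where
  "state_dist th pl x0 0 = (\<lambda>y. if y = x0 then 1 else 0)"
| "state_dist th pl x0 (Suc t) = (\<lambda>y. \<Sum>x\<in>UNIV. state_dist th pl x0 t x * th x y (pl x))"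

definition avg_reward :: "('x::finite \<Rightarrow> 'u \<Rightarrow> real) \<Rightarrow> ('x \<Rightarrow> 'x \<Rightarrow> 'u \<Rightarrow> real) \<Rightarrow> ('x \<Rightarrow> 'u) \<Rightarrow> 'x \<Rightarrow> real" where
  "avg_reward r th pl x0 = real_of_ereal (liminf (\<lambda>T::nat.
      ereal ((1 / real T) * (\<Sum>t<T. \<Sum>x\<in>UNIV. state_dist th pl x0 t x * r x (pl x)))))"

definition KL :: "('x::finite \<Rightarrow> real) \<Rightarrow> ('x \<Rightarrow> real) \<Rightarrow> ereal" where
  "KL p1 p2 = (\<Sum>x\<in>UNIV. if p1 x = 0 then 0 else if p2 x = 0 then \<infinity>
                          else ereal (p1 x * ln (p1 x / p2 x)))"

text \<open>Counts along a trajectory (xs t, us t), t = 1,2,...; "up to time t" = times 1..t-1.\<close>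

definition cnt_xu :: "(nat \<Rightarrow> 'x) \<Rightarrow> (nat \<Rightarrow> 'u) \<Rightarrow> 'x \<Rightarrow> 'u \<Rightarrow> nat \<Rightarrow> nat" where
  "cnt_xu xs us x u t = card {s\<in>{1..<t}. xs s = x \<and> us s = u}"

definition cnt_xyu :: "(nat \<Rightarrow> 'x) \<Rightarrow> (nat \<Rightarrow> 'u) \<Rightarrow> 'x \<Rightarrow> 'x \<Rightarrow> 'u \<Rightarrow> nat \<Rightarrow> nat" where
  "cnt_xyu xs us x y u t = card {s\<in>{1..<t}. xs s = x \<and> us s = u \<and> xs (Suc s) = y}"

definition phat :: "(nat \<Rightarrow> 'x) \<Rightarrow> (nat \<Rightarrow> 'u) \<Rightarrow> 'x \<Rightarrow> 'x \<Rightarrow> 'u \<Rightarrow> nat \<Rightarrow> real" where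
  "phat xs us x y u t = real (cnt_xyu xs us x y u t) / real (max (cnt_xu xs us x u t) 1)"

text \<open>Episode start times: tau_0 = 1, |E_k| = 2^k, hence tau_k = 2^k.\<close>

definition tau :: "nat \<Rightarrow> nat" where
  "tau k = 2 ^ k"

definition alpha :: "real \<Rightarrow> real \<Rightarrow> nat \<Rightarrow> nat \<Rightarrow> nat \<Rightarrow> real" where
  "alpha a b nX nU t = a * ln (real t powr b * real nX ^ 2 * real nU)"

text \<open>RBMLE objective of episode k for policy pl and kernel th
  (J is evaluated from the initial state xs 1).\<close>

definition rbmle_obj :: "('x::finite \<Rightarrow> 'u::finite \<Rightarrow> real) \<Rightarrow> real \<Rightarrow> real \<Rightarrow> (nat \<Rightarrow> 'x) \<Rightarrow> (nat \<Rightarrow> 'u)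
    \<Rightarrow> nat \<Rightarrow> ('x \<Rightarrow> 'u) \<Rightarrow> ('x \<Rightarrow> 'x \<Rightarrow> 'u \<Rightarrow> real) \<Rightarrow> ereal" where
  "rbmle_obj r a b xs us k pl th =
     ereal (alpha a b (card (UNIV :: 'x set)) (card (UNIV :: 'u set)) (tau k) * avg_reward r th pl (xs 1))
     - (\<Sum>x\<in>UNIV. \<Sum>u\<in>UNIV. ereal (real (cnt_xu xs us x u (tau k)))
           * KL (\<lambda>y. phat xs us x y u (tau k)) (\<lambda>y. th x y u))"

definition rbmle_index :: "('x::finite \<Rightarrow> 'x \<Rightarrow> 'u::finite \<Rightarrow> real) \<Rightarrow> ('x \<Rightarrow> 'u \<Rightarrow> real) \<Rightarrow> real \<Rightarrow> real
    \<Rightarrow> (nat \<Rightarrow> 'x) \<Rightarrow> (nat \<Rightarrow> 'u) \<Rightarrow> nat \<Rightarrow> ('x \<Rightarrow> 'u) \<Rightarrow> ereal" where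
  "rbmle_index p r a b xs us k pl = (SUP th\<in>Theta p. rbmle_obj r a b xs us k pl th)"

end

theory Submission
  imports Defs
begin

text \<open>Let \<open>\<theta>'\<close> be the empirical kernel \<open>p\<^sub>k\<close> on the visited pairs (and \<open>\<theta>\<close>
  elsewhere). It lies in \<open>\<Theta>\<close> because the trajectory only uses transitions of positive
  probability, and its KL penalty vanishes. Comparing the objective at the maximiser \<open>\<theta>\<close> with
  that at \<open>\<theta>'\<close>, and using \<open>0 \<le> J \<le> 1\<close>, bounds the total penalty
  \<open>\<Sum> n(x,u) KL(p\<^sub>k(x,u), \<theta>(x,u))\<close> by \<open>\<alpha>(\<tau>\<^sub>k)\<close>. Each summand is at least
  \<open>2 n(x,u) (\<theta>(x,y,u) - p\<^sub>k(x,y,u))\<^sup>2\<close> by a coordinatewise Pinsker inequality, which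
  follows from the binary Pinsker inequality and the log-sum inequality.\<close>

section \<open>A coordinatewise Pinsker inequality\<close>

definition kl_term :: "real \<Rightarrow> real \<Rightarrow> real" where
  "kl_term a b = (if a = 0 then 0 else a * ln (a / b))"

lemma binary_pinsker_le:
  fixes a b :: real
  assumes "0 \<le> a" "a \<le> b" "b < 1"
  shows "2 * (a - b)\<^sup>2 \<le> kl_term a b + kl_term (1 - a) (1 - b)"
proof (cases "a = b")
  case True
  then show ?thesis by (simp add: kl_term_def)
next
  case False
  then have "a < b" using assms by simp
  define g where "g t = - a * ln t - (1 - a) * ln (1 - t) - 2 * (a - t)\<^sup>2" for t :: real
  have "g a \<le> g b"
  proof (rule DERIV_nonneg_imp_increasing_open[OF assms(2)])
    fix t assume t: "a < t" "t < b"
    then have t01: "0 < t" "t < 1" using assms by auto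
    have "DERIV (\<lambda>t. (a - t)\<^sup>2) t :> 2 * t - 2 * a"
      by (auto intro!: derivative_eq_intros simp: algebra_simps)
    then have "DERIV g t :> - a * (1 / t) - (1 - a) * (1 / (1 - t) * (0 - 1)) - 2 * (2 * (a - t) * (0 - 1))"
      unfolding g_def using t01
      by (intro DERIV_diff DERIV_cmult DERIV_ln_divide DERIV_chain2[OF DERIV_ln_divide]
          DERIV_const DERIV_ident) (simp_all add: algebra_simps)
    then have "DERIV g t :> - a / t + (1 - a) / (1 - t) + 4 * (a - t)"
      by (simp add: algebra_simps)
    moreover have "- a / t + (1 - a) / (1 - t) + 4 * (a - t) = (t - a) * (2 * t - 1)\<^sup>2 / (t * (1 - t))"
      using t01 by (simp add: field_simps power2_eq_square)
    moreover have "0 \<le> (t - a) * (2 * t - 1)\<^sup>2 / (t * (1 - t))"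
      using t t01 by simp
    ultimately show "\<exists>y. DERIV g t :> y \<and> 0 \<le> y" by auto
  next
    show "continuous_on {a..b} g"
    proof (cases "a = 0")
      case True
      then have "g = (\<lambda>t. - ln (1 - t) - 2 * (a - t)\<^sup>2)" by (auto simp: g_def)
      then show ?thesis using assms by (auto intro!: continuous_intros)
    next
      case False
      then show ?thesis unfolding g_def using assms by (auto intro!: continuous_intros)
    qed
  qed
  moreover have "kl_term a b = - a * ln b + a * ln a"
    using assms \<open>a < b\<close> by (cases "a = 0") (auto simp: kl_term_def ln_div algebra_simps)
  moreover have "kl_term (1 - a) (1 - b) = - (1 - a) * ln (1 - b) + (1 - a) * ln (1 - a)"
    using assms \<open>a < b\<close> by (auto simp: kl_term_def ln_div algebra_simps)
  ultimately show ?thesis unfolding g_def by (simp add: algebra_simps)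
qed

lemma binary_pinsker:
  fixes a b :: real
  assumes "0 \<le> a" "a \<le> 1" "0 \<le> b" "b \<le> 1"
    and "a \<noteq> 0 \<Longrightarrow> b \<noteq> 0" "a \<noteq> 1 \<Longrightarrow> b \<noteq> 1"
  shows "2 * (a - b)\<^sup>2 \<le> kl_term a b + kl_term (1 - a) (1 - b)"
proof -
  consider "b = 0" | "b = 1" | "a \<le> b" "0 < b" "b < 1" | "b \<le> a" "0 < b" "b < 1"
    using assms by linarith
  then show ?thesis
  proof cases
    case 3
    then show ?thesis using assms by (intro binary_pinsker_le)
  next
    case 4
    then have "2 * ((1 - a) - (1 - b))\<^sup>2 \<le> kl_term (1 - a) (1 - b) + kl_term (1 - (1 - a)) (1 - (1 - b))"
      using assms by (intro binary_pinsker_le) auto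
    then show ?thesis by (simp add: power2_commute algebra_simps)
  qed (use assms in \<open>auto simp: kl_term_def\<close>)
qed

lemma log_sum_inequality:
  fixes P Q :: "'a \<Rightarrow> real"
  assumes "finite B" and nonneg: "\<And>x. x \<in> B \<Longrightarrow> 0 \<le> P x" "\<And>x. x \<in> B \<Longrightarrow> 0 \<le> Q x"
    and support: "\<And>x. x \<in> B \<Longrightarrow> P x \<noteq> 0 \<Longrightarrow> Q x \<noteq> 0"
  shows "kl_term (sum P B) (sum Q B) \<le> (\<Sum>x\<in>B. kl_term (P x) (Q x))"
proof (cases "sum P B = 0")
  case True
  then have "\<forall>x\<in>B. P x = 0" using sum_nonneg_eq_0_iff[OF \<open>finite B\<close>] nonneg by blast
  then show ?thesis using True by (simp add: kl_term_def)
next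
  case False
  define c where "c = sum P B / sum Q B"
  obtain x0 where x0: "x0 \<in> B" "P x0 \<noteq> 0" using False by (meson sum.neutral)
  then have "0 < Q x0" using nonneg support by force
  then have "0 < sum Q B" using sum_mono2[OF \<open>finite B\<close>, of "{x0}" Q] x0 nonneg by force
  moreover have "0 < sum P B" using False sum_nonneg[of B P] nonneg by force
  ultimately have "0 < c" by (simp add: c_def)
  \<comment> \<open>\<open>ln y \<le> y - 1\<close> at \<open>y = c Q x / P x\<close>, summed over \<open>B\<close>\<close>
  have "P x * ln c + P x - c * Q x \<le> kl_term (P x) (Q x)" if "x \<in> B" for x
  proof (cases "P x = 0")
    case True
    then show ?thesis using \<open>0 < c\<close> nonneg that by (simp add: kl_term_def)
  next
    case False
    have px: "0 < P x" using False nonneg that by force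
    have qx: "0 < Q x" using support[OF that False] nonneg that by force
    have "ln (c * Q x / P x) \<le> c * Q x / P x - 1"
      using \<open>0 < c\<close> px qx by (intro ln_le_minus_one) simp
    then have "P x * ln (c * Q x / P x) \<le> c * Q x - P x"
      using px by (simp add: field_simps)
    moreover have "ln (c * Q x / P x) = ln c - ln (P x / Q x)"
      using \<open>0 < c\<close> px qx by (simp add: ln_div ln_mult)
    ultimately show ?thesis using False by (simp add: kl_term_def algebra_simps)
  qed
  then have "(\<Sum>x\<in>B. P x * ln c + P x - c * Q x) \<le> (\<Sum>x\<in>B. kl_term (P x) (Q x))"
    by (rule sum_mono)
  moreover have "(\<Sum>x\<in>B. P x * ln c + P x - c * Q x) = sum P B * ln c + sum P B - c * sum Q B"
    by (simp add: sum.distrib sum_subtractf sum_distrib_left sum_distrib_right)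
  moreover have "c * sum Q B = sum P B" using \<open>0 < sum Q B\<close> by (simp add: c_def)
  ultimately show ?thesis using False by (simp add: kl_term_def c_def)
qed

lemma KL_eq_sum_kl_term:
  assumes "\<And>x. P x \<noteq> 0 \<Longrightarrow> Q x \<noteq> 0"
  shows "KL P Q = ereal (\<Sum>x\<in>UNIV. kl_term (P x) (Q x))"
  unfolding KL_def sum_ereal[symmetric] using assms by (intro sum.cong) (auto simp: kl_term_def)

lemma KL_ge_sq_diff:
  fixes P Q :: "'x::finite \<Rightarrow> real"
  assumes P_nonneg: "\<And>x. 0 \<le> P x" and Q_nonneg: "\<And>x. 0 \<le> Q x"
    and P_sum: "(\<Sum>x\<in>UNIV. P x) = 1" and Q_sum: "(\<Sum>x\<in>UNIV. Q x) = 1"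
  shows "ereal (2 * (P y - Q y)\<^sup>2) \<le> KL P Q"
proof (cases "\<exists>x. P x \<noteq> 0 \<and> Q x = 0")
  case True
  then have "KL P Q = \<infinity>" unfolding KL_def by (subst sum_Pinfty) auto
  then show ?thesis by simp
next
  case False
  then have support: "\<And>x. P x \<noteq> 0 \<Longrightarrow> Q x \<noteq> 0" by blast
  have KL_eq: "KL P Q = ereal (\<Sum>x\<in>UNIV. kl_term (P x) (Q x))"
    using support by (rule KL_eq_sum_kl_term)
  let ?B = "UNIV - {y}"
  \<comment> \<open>lump all coordinates other than \<open>y\<close> together and apply the binary inequality\<close>
  have P_rest: "sum P ?B = 1 - P y" and Q_rest: "sum Q ?B = 1 - Q y"
    using P_sum Q_sum sum.remove[of UNIV y P] sum.remove[of UNIV y Q] by simp_all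
  have "P y \<le> 1" "Q y \<le> 1" using P_rest Q_rest sum_nonneg P_nonneg Q_nonneg by (metis diff_ge_0_iff_ge)+
  have "Q y \<noteq> 1" if "P y \<noteq> 1"
  proof
    assume "Q y = 1"
    then have "\<forall>x\<in>?B. Q x = 0" using Q_rest sum_nonneg_eq_0_iff[of ?B Q] Q_nonneg by simp
    then have "sum P ?B = 0" using support by (intro sum.neutral) blast
    then show False using P_rest that by simp
  qed
  then have "2 * (P y - Q y)\<^sup>2 \<le> kl_term (P y) (Q y) + kl_term (1 - P y) (1 - Q y)"
    using P_nonneg Q_nonneg \<open>P y \<le> 1\<close> \<open>Q y \<le> 1\<close> support by (intro binary_pinsker) auto
  also have "\<dots> \<le> kl_term (P y) (Q y) + (\<Sum>x\<in>?B. kl_term (P x) (Q x))"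
    using log_sum_inequality[of ?B P Q] P_nonneg Q_nonneg support P_rest Q_rest by simp
  also have "\<dots> = (\<Sum>x\<in>UNIV. kl_term (P x) (Q x))"
    using sum.remove[of UNIV y "\<lambda>x. kl_term (P x) (Q x)"] by simp
  finally show ?thesis using KL_eq by simp
qed

lemma KL_self: "KL P P = 0"
  unfolding KL_def by (intro sum.neutral ballI) (simp add: zero_ereal_def)

lemma state_dist_nonneg:
  assumes "\<And>x y u. 0 \<le> th x y u"
  shows "0 \<le> state_dist th pl x0 t x"
  using assms by (induction t arbitrary: x) (auto intro!: sum_nonneg)

lemma sum_state_dist:
  assumes "\<And>x u. (\<Sum>y\<in>UNIV. th x y u) = 1"
  shows "(\<Sum>x\<in>UNIV. state_dist th pl x0 t x) = 1"
proof (induction t)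
  case (Suc t)
  have "(\<Sum>y\<in>UNIV. \<Sum>x\<in>UNIV. state_dist th pl x0 t x * th x y (pl x))
        = (\<Sum>x\<in>UNIV. state_dist th pl x0 t x * (\<Sum>y\<in>UNIV. th x y (pl x)))"
    by (subst sum.swap) (simp add: sum_distrib_left)
  then show ?case using Suc assms by simp
qed simp

lemma avg_reward_bounds:
  assumes "\<And>x y u. 0 \<le> th x y u" "\<And>x u. (\<Sum>y\<in>UNIV. th x y u) = 1"
    and "\<And>x u. 0 \<le> r x u" "\<And>x u. r x u \<le> 1"
  shows "0 \<le> avg_reward r th pl x0" "avg_reward r th pl x0 \<le> 1"
proof -
  define g where "g t = (\<Sum>x\<in>UNIV. state_dist th pl x0 t x * r x (pl x))" for t
  have g: "0 \<le> g t \<and> g t \<le> 1" for t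
  proof -
    have "g t \<le> (\<Sum>x\<in>UNIV. state_dist th pl x0 t x)"
      unfolding g_def using assms state_dist_nonneg[of th, OF assms(1)]
      by (intro sum_mono mult_right_le_one_le) auto
    moreover have "0 \<le> g t"
      unfolding g_def using assms state_dist_nonneg[of th, OF assms(1)] by (intro sum_nonneg) simp
    ultimately show ?thesis using sum_state_dist[of th, OF assms(2)] by simp
  qed
  define A where "A T = (1 / real T) * (\<Sum>t<T. g t)" for T :: nat
  have A: "0 \<le> A T \<and> A T \<le> 1" for T
  proof -
    have "(\<Sum>t<T. g t) \<le> T" using sum_mono[of "{..<T}" g "\<lambda>_. 1"] g by simp
    moreover have "0 \<le> (\<Sum>t<T. g t)" using g by (intro sum_nonneg) auto
    ultimately show ?thesis by (cases "T = 0") (simp_all add: A_def field_simps)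
  qed
  define L where "L = liminf (\<lambda>T. ereal (A T))"
  have "ereal 0 \<le> L" unfolding L_def using A by (intro Liminf_bounded) auto
  moreover have "L \<le> ereal 1" unfolding L_def using A by (intro Liminf_le) auto
  moreover have "avg_reward r th pl x0 = real_of_ereal L"
    unfolding avg_reward_def L_def A_def g_def by simp
  ultimately obtain l where "L = ereal l" "0 \<le> l" "l \<le> 1"
    by (cases L) auto
  with \<open>avg_reward r th pl x0 = real_of_ereal L\<close>
  show "0 \<le> avg_reward r th pl x0" "avg_reward r th pl x0 \<le> 1"
    by simp_all
qed

section \<open>Empirical transition probabilities\<close>

lemma cnt_xyu_le_cnt_xu: "cnt_xyu xs us x y u t \<le> cnt_xu xs us x u t"
  unfolding cnt_xyu_def cnt_xu_def by (intro card_mono) auto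

lemma sum_cnt_xyu:
  fixes xs :: "nat \<Rightarrow> 'x::finite"
  shows "(\<Sum>y\<in>UNIV. cnt_xyu xs us x y u t) = cnt_xu xs us x u t"
proof -
  have "{s\<in>{1..<t}. xs s = x \<and> us s = u}
      = (\<Union>y. {s\<in>{1..<t}. xs s = x \<and> us s = u \<and> xs (Suc s) = y})"
    by auto
  moreover have "card (\<Union>y. {s\<in>{1..<t}. xs s = x \<and> us s = u \<and> xs (Suc s) = y})
      = (\<Sum>y\<in>UNIV. card {s\<in>{1..<t}. xs s = x \<and> us s = u \<and> xs (Suc s) = y})"
    by (intro card_UN_disjoint) auto
  ultimately show ?thesis unfolding cnt_xyu_def cnt_xu_def by simp
qed

lemma phat_nonneg: "0 \<le> phat xs us x y u t"
  by (simp add: phat_def)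

lemma phat_le_one: "phat xs us x y u t \<le> 1"
  using cnt_xyu_le_cnt_xu[of xs us x y u t] by (simp add: phat_def divide_le_eq_1 le_max_iff_disj)

lemma sum_phat:
  fixes xs :: "nat \<Rightarrow> 'x::finite"
  assumes "0 < cnt_xu xs us x u t"
  shows "(\<Sum>y\<in>UNIV. phat xs us x y u t) = 1"
  using assms sum_cnt_xyu[of xs us x u t]
  by (simp add: phat_def flip: sum_divide_distrib of_nat_sum)

lemma phat_eq_0_if_transition_impossible:
  fixes p :: "'x \<Rightarrow> 'x \<Rightarrow> 'u \<Rightarrow> real"
  assumes "\<forall>s\<ge>1. p (xs s) (xs (Suc s)) (us s) > 0" and "p x y u = 0"
  shows "phat xs us x y u t = 0"
proof -
  have "{s\<in>{1..<t}. xs s = x \<and> us s = u \<and> xs (Suc s) = y} = {}"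
    using assms by force
  then show ?thesis by (simp add: phat_def cnt_xyu_def)
qed

text \<open>Pairs not yet visited carry no KL penalty; filling them with \<open>th\<close> keeps the kernel in \<open>Theta p\<close>.\<close>

definition emp_kernel :: "(nat \<Rightarrow> 'x) \<Rightarrow> (nat \<Rightarrow> 'u) \<Rightarrow> nat \<Rightarrow> ('x \<Rightarrow> 'x \<Rightarrow> 'u \<Rightarrow> real)
    \<Rightarrow> 'x \<Rightarrow> 'x \<Rightarrow> 'u \<Rightarrow> real" where
  "emp_kernel xs us t th x y u = (if 0 < cnt_xu xs us x u t then phat xs us x y u t else th x y u)"

lemma emp_kernel_in_Theta:
  assumes "\<forall>s\<ge>1. p (xs s) (xs (Suc s)) (us s) > 0" and "th \<in> Theta p"
  shows "emp_kernel xs us t th \<in> Theta p"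
proof -
  have "(\<Sum>y\<in>UNIV. emp_kernel xs us t th x y u) = 1" for x u
    using assms(2) sum_phat by (cases "0 < cnt_xu xs us x u t") (auto simp: emp_kernel_def Theta_def)
  then show ?thesis
    using assms phat_nonneg phat_le_one phat_eq_0_if_transition_impossible
    unfolding Theta_def emp_kernel_def by auto
qed

section \<open>The KL penalty of the RBMLE objective\<close>

definition kl_penalty :: "(nat \<Rightarrow> 'x::finite) \<Rightarrow> (nat \<Rightarrow> 'u::finite) \<Rightarrow> nat
    \<Rightarrow> ('x \<Rightarrow> 'x \<Rightarrow> 'u \<Rightarrow> real) \<Rightarrow> ereal" where
  "kl_penalty xs us t th = (\<Sum>x\<in>UNIV. \<Sum>u\<in>UNIV. ereal (real (cnt_xu xs us x u t))
      * KL (\<lambda>y. phat xs us x y u t) (\<lambda>y. th x y u))"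

lemma rbmle_obj_eq:
  "rbmle_obj r a b xs us k pl th =
     ereal (alpha a b (card (UNIV :: 'x set)) (card (UNIV :: 'u set)) (tau k) * avg_reward r th pl (xs 1)) - kl_penalty xs us (tau k) th"
  for xs :: "nat \<Rightarrow> 'x::finite" and us :: "nat \<Rightarrow> 'u::finite"
  unfolding rbmle_obj_def kl_penalty_def ..

lemma kl_penalty_emp_kernel: "kl_penalty xs us t (emp_kernel xs us t th) = 0"
proof -
  have summand_zero: "ereal (real (cnt_xu xs us x u t))
      * KL (\<lambda>y. phat xs us x y u t) (\<lambda>y. emp_kernel xs us t th x y u) = 0" for x u
    by (cases "cnt_xu xs us x u t = 0") (simp_all add: emp_kernel_def KL_self)
  show ?thesis unfolding kl_penalty_def by (simp add: summand_zero)
qed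

lemma kl_penalty_summand_nonneg:
  assumes "th \<in> Theta p"
  shows "0 \<le> ereal (real (cnt_xu xs us x u t)) * KL (\<lambda>y. phat xs us x y u t) (\<lambda>y. th x y u)"
proof (cases "cnt_xu xs us x u t = 0")
  case False
  then have "ereal 0 \<le> KL (\<lambda>y. phat xs us x y u t) (\<lambda>y. th x y u)"
    using assms KL_ge_sq_diff[of "\<lambda>y. phat xs us x y u t" "\<lambda>y. th x y u" x]
    by (auto simp: Theta_def phat_nonneg sum_phat intro: order_trans[rotated])
  then show ?thesis by (simp add: zero_ereal_def[symmetric])
qed (simp add: zero_ereal_def[symmetric])

lemma kl_penalty_summand_le:
  assumes "th \<in> Theta p"
  shows "ereal (real (cnt_xu xs us x u t)) * KL (\<lambda>y. phat xs us x y u t) (\<lambda>y. th x y u)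
           \<le> kl_penalty xs us t th"
proof -
  let ?f = "\<lambda>x u. ereal (real (cnt_xu xs us x u t)) * KL (\<lambda>y. phat xs us x y u t) (\<lambda>y. th x y u)"
  have nonneg: "0 \<le> ?f x u" for x u using kl_penalty_summand_nonneg[OF assms] .
  have "?f x u \<le> (\<Sum>u'\<in>UNIV. ?f x u')"
    using sum_mono2[of UNIV "{u}" "?f x"] nonneg by simp
  also have "\<dots> \<le> (\<Sum>x'\<in>UNIV. \<Sum>u'\<in>UNIV. ?f x' u')"
    using sum_mono2[of UNIV "{x}" "\<lambda>x'. \<Sum>u'\<in>UNIV. ?f x' u'"] nonneg by (simp add: sum_nonneg)
  finally show ?thesis unfolding kl_penalty_def .
qed

lemma alpha_nonneg:
  assumes "0 \<le> a" "0 \<le> b" "1 \<le> t" "1 \<le> nX" "1 \<le> nU"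
  shows "0 \<le> alpha a b nX nU t"
proof -
  have "1 \<le> real t powr b" using assms by (intro ge_one_powr_ge_zero) auto
  moreover have "1 \<le> real nX ^ 2" "1 \<le> real nU" using assms by auto
  ultimately have "1 * 1 * 1 \<le> real t powr b * real nX ^ 2 * real nU"
    by (intro mult_mono) auto
  then show ?thesis using assms by (simp add: alpha_def)
qed

lemma kl_penalty_le_alpha:
  fixes xs :: "nat \<Rightarrow> 'x::finite" and us :: "nat \<Rightarrow> 'u::finite"
  assumes "0 < a" "0 \<le> b" and r_range: "\<And>x u. 0 \<le> r x u" "\<And>x u. r x u \<le> 1"
    and traj: "\<forall>s\<ge>1. p (xs s) (xs (Suc s)) (us s) > 0"
    and th_in: "th \<in> Theta p"
    and th_max: "\<forall>th'\<in>Theta p. rbmle_obj r a b xs us k pl th' \<le> rbmle_obj r a b xs us k pl th"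
  shows "kl_penalty xs us (tau k) th \<le> ereal (alpha a b (card (UNIV :: 'x set)) (card (UNIV :: 'u set)) (tau k))"
proof -
  define al where "al = alpha a b (card (UNIV :: 'x set)) (card (UNIV :: 'u set)) (tau k)"
  define th' where "th' = emp_kernel xs us (tau k) th"
  have th'_in: "th' \<in> Theta p" unfolding th'_def using emp_kernel_in_Theta[OF traj th_in] .
  have "0 \<le> al" unfolding al_def using assms
    by (intro alpha_nonneg) (auto simp: tau_def Suc_le_eq card_gt_0_iff)
  moreover have "avg_reward r th pl (xs 1) \<le> 1" "0 \<le> avg_reward r th' pl (xs 1)"
    using th_in th'_in r_range by (auto simp: Theta_def intro!: avg_reward_bounds)
  ultimately have "al * (avg_reward r th pl (xs 1) - avg_reward r th' pl (xs 1)) \<le> al * 1"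
    by (intro mult_left_mono) auto
  moreover have "ereal (al * avg_reward r th' pl (xs 1))
      \<le> ereal (al * avg_reward r th pl (xs 1)) - kl_penalty xs us (tau k) th"
  proof -
    have "rbmle_obj r a b xs us k pl th' \<le> rbmle_obj r a b xs us k pl th"
      using th_max th'_in by blast
    then show ?thesis unfolding rbmle_obj_eq th'_def kl_penalty_emp_kernel al_def by simp
  qed
  moreover have "0 \<le> kl_penalty xs us (tau k) th"
    using kl_penalty_summand_nonneg[OF th_in] unfolding kl_penalty_def by (simp add: sum_nonneg)
  ultimately show ?thesis unfolding al_def
    by (cases "kl_penalty xs us (tau k) th") (auto simp: algebra_simps)
qed

theorem lemma2:
  fixes p :: "'x::finite \<Rightarrow> 'x \<Rightarrow> 'u::finite \<Rightarrow> real"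
    and r :: "'x \<Rightarrow> 'u \<Rightarrow> real"
    and a b :: real
    and xs :: "nat \<Rightarrow> 'x" and us :: "nat \<Rightarrow> 'u"
    and pol :: "nat \<Rightarrow> 'x \<Rightarrow> 'u"
    and k :: nat and pl :: "'x \<Rightarrow> 'u"
    and th :: "'x \<Rightarrow> 'x \<Rightarrow> 'u \<Rightarrow> real"
  assumes p_nonneg: "\<forall>x y u. 0 \<le> p x y u"
    and p_stoch: "\<forall>x u. (\<Sum>y\<in>UNIV. p x y u) = 1"
    and r_range: "\<forall>x u. 0 < r x u \<and> r x u \<le> 1"
    and a_pos: "a > 0" and b_gt: "b > 2"
    and traj: "\<forall>s\<ge>1. p (xs s) (xs (Suc s)) (us s) > 0"
    and pol_max: "\<forall>j pl'. rbmle_index p r a b xs us j pl' \<le> rbmle_index p r a b xs us j (pol j)"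
    and actions: "\<forall>j s. tau j \<le> s \<and> s < tau (Suc j) \<longrightarrow> us s = pol j (xs s)"
    and th_in: "th \<in> Theta p"
    and th_max: "\<forall>th'\<in>Theta p. rbmle_obj r a b xs us k pl th' \<le> rbmle_obj r a b xs us k pl th"
  shows "\<forall>x y u. cnt_xu xs us x u (tau k) > 0 \<longrightarrow>
           \<bar>th x y u - phat xs us x y u (tau k)\<bar>
             \<le> sqrt (alpha a b (card (UNIV :: 'x set)) (card (UNIV :: 'u set)) (tau k) / (2 * real (cnt_xu xs us x u (tau k))))"
proof (intro allI impI)
  fix x y u
  assume n_pos: "cnt_xu xs us x u (tau k) > 0"
  define n where "n = real (cnt_xu xs us x u (tau k))"
  define al where "al = alpha a b (card (UNIV :: 'x set)) (card (UNIV :: 'u set)) (tau k)"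
  let ?ph = "\<lambda>y. phat xs us x y u (tau k)"
  have pinsker: "ereal (2 * (?ph y - th x y u)\<^sup>2) \<le> KL ?ph (\<lambda>y. th x y u)"
    using th_in n_pos by (intro KL_ge_sq_diff) (auto simp: Theta_def phat_nonneg sum_phat)
  have "ereal (n * (2 * (?ph y - th x y u)\<^sup>2)) = ereal n * ereal (2 * (?ph y - th x y u)\<^sup>2)"
    by simp
  also have "\<dots> \<le> ereal n * KL ?ph (\<lambda>y. th x y u)"
    using pinsker by (intro ereal_mult_left_mono) (auto simp: n_def)
  also have "\<dots> \<le> kl_penalty xs us (tau k) th"
    unfolding n_def using kl_penalty_summand_le[OF th_in] .
  also have "\<dots> \<le> ereal al"
    unfolding al_def using a_pos b_gt r_range traj th_in th_max
    by (intro kl_penalty_le_alpha) (auto simp: less_imp_le)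
  finally have "(th x y u - ?ph y)\<^sup>2 \<le> al / (2 * n)"
    using n_pos by (simp add: n_def field_simps power2_commute)
  then show "\<bar>th x y u - ?ph y\<bar> \<le> sqrt (alpha a b (card (UNIV :: 'x set)) (card (UNIV :: 'u set)) (tau k) / (2 * real (cnt_xu xs us x u (tau k))))"
    unfolding al_def n_def using real_sqrt_le_mono by fastforce
qed

end
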